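(* Let $A$ be a finite set of relatively prime positive integers. Then $\mathrm{Geo}(A)\le \mathrm{Add}(A)$.
   Context: $\mathbb{N}$ denotes the set of positive integers; $K-K=\{x-y : x,y\in K\}$. A set of integers is relatively prime if it is nonempty and its elements have no common factor greater than $1$. An $\mathcal{N}$-set in $\mathbb{R}$ is a compact set $K\subseteq\mathbb{R}$ such that for every $x\in\mathbb{R}$ there exists $y\in K$ with $x-y\in\mathbb{Z}$. A representation of $1$ by elements of $A$ consists of pairwise distinct $a_1,\ldots,a_h\in A$, positive integers $w_1,\ldots,w_h$ and signs $\varepsilon_1,\ldots,\varepsilon_h\in\{1,-1\}$ with $\sum_{i=1}^h\varepsilon_i w_i a_i=1$; its weight is $\sum_{i=1}^h w_i+\operatorname{card}(A)-h$. The additive weight $\mathrm{Add}(A)$ is the smallest weight of a representation of $1$ by elements of $A$. The weight of an $\mathcal{N}$-set is its number of connected components, and the geometric weight $\mathrm{Geo}(A)$ is the smallest weight of an $\mathcal{N}$-set $K$ with $A=(K-K)\cap\mathbb{N}$. *)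

theory Defs
  imports "HOL-Analysis.Analysis" "HOL-Library.Extended_Nat"
begin

definition rel_prime_set :: "nat set \<Rightarrow> bool" where
  "rel_prime_set A \<longleftrightarrow> A \<noteq> {} \<and> Gcd A = 1"

definition is_rep :: "nat set \<Rightarrow> nat set \<Rightarrow> (nat \<Rightarrow> nat) \<Rightarrow> (nat \<Rightarrow> int) \<Rightarrow> bool" where
  "is_rep A S w e \<longleftrightarrow> S \<subseteq> A \<and> finite S \<and> (\<forall>a\<in>S. w a \<ge> 1 \<and> e a \<in> {1, -1})
     \<and> (\<Sum>a\<in>S. e a * int (w a) * int a) = 1"

definition rep_weight :: "nat set \<Rightarrow> nat set \<Rightarrow> (nat \<Rightarrow> nat) \<Rightarrow> nat" where
  "rep_weight A S w = (\<Sum>a\<in>S. w a) + card A - card S"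

definition Add :: "nat set \<Rightarrow> enat" where
  "Add A = (INF p \<in> {(S, w, e). is_rep A S w e}. enat (rep_weight A (fst p) (fst (snd p))))"

definition N_set :: "real set \<Rightarrow> bool" where
  "N_set K \<longleftrightarrow> compact K \<and> (\<forall>x. \<exists>y\<in>K. x - y \<in> \<int>)"

definition nset_weight :: "real set \<Rightarrow> enat" where
  "nset_weight K = (if finite (components K) then enat (card (components K)) else \<infinity>)"

definition pos_diffs :: "real set \<Rightarrow> nat set" where
  "pos_diffs K = {n. n > 0 \<and> (\<exists>x\<in>K. \<exists>y\<in>K. x - y = real n)}"

definition Geo :: "nat set \<Rightarrow> enat" where
  "Geo A = (INF K \<in> {K. N_set K \<and> A = pos_diffs K}. nset_weight K)"

end

theory Submission
  imports Defs
begin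

(* Unfold a representation  \<Sum> e(a) w(a) a = 1  into the list ts of its n = \<Sum> w(a) signed
   summands t_0, ..., t_{n-1}.  The staircase of ts consists of the n intervals
   [k/n, (k+1)/n] - (t_0 + ... + t_{k-1}); consecutive intervals (cyclically, since the t_k sum
   to 1) overlap modulo 1 exactly in their endpoints, so the staircase meets every class of \<real>/\<int>
   and its positive integer differences are exactly the |t_k|, i.e. the elements of S.  Points
   r with 0 < r < 1/n are the only staircase points of their class modulo \<int>; adjoining the
   points r_b + b for the remaining b \<in> A - S therefore adds exactly the differences b.  The
   resulting set has at most n + card (A - S) components, which is the weight of the
   representation. *)

lemma components_Union_card_le:
  fixes F :: "'a::topological_space set set"
  assumes "finite F" and "\<And>C. C \<in> F \<Longrightarrow> connected C \<and> C \<noteq> {}"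
  shows "finite (components (\<Union>F)) \<and> card (components (\<Union>F)) \<le> card F"
proof -
  define comp_of where "comp_of C = connected_component_set (\<Union>F) (SOME y. y \<in> C)" for C
  have "components (\<Union>F) \<subseteq> comp_of ` F"
  proof
    fix D assume "D \<in> components (\<Union>F)"
    then obtain x where x: "x \<in> \<Union>F" "D = connected_component_set (\<Union>F) x"
      by (auto simp: components_def)
    then obtain C where C: "C \<in> F" "x \<in> C" by blast
    have "C \<subseteq> connected_component_set (\<Union>F) x"
      using connected_component_maximal[of x C "\<Union>F"] C assms(2) by blast
    moreover have "(SOME y. y \<in> C) \<in> C" using C by (meson someI)
    ultimately have "comp_of C = D"
      using x connected_component_eq unfolding comp_of_def by blast
    then show "D \<in> comp_of ` F" using C by blast
  qed
  then show ?thesis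
    by (meson assms(1) card_image_le finite_imageI finite_subset card_mono order_trans)
qed

lemma nset_weight_Union_le:
  assumes "finite F" and "\<And>C. C \<in> F \<Longrightarrow> connected C \<and> C \<noteq> {}"
  shows "nset_weight (\<Union>F) \<le> enat (card F)"
  using components_Union_card_le[OF assms] by (simp add: nset_weight_def)

definition step_shift :: "int list \<Rightarrow> nat \<Rightarrow> int" where
  "step_shift ts k = - sum_list (take k ts)"

definition step :: "int list \<Rightarrow> nat \<Rightarrow> real set" where
  "step ts k = (\<lambda>x. x + of_int (step_shift ts k)) `
     {real k / real (length ts) .. real (Suc k) / real (length ts)}"

definition staircase :: "int list \<Rightarrow> real set" where
  "staircase ts = (\<Union>k<length ts. step ts k)"

lemma staircase_memI: "k < length ts \<Longrightarrow> x \<in> step ts k \<Longrightarrow> x \<in> staircase ts"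
  unfolding staircase_def by blast

lemma step_shift_Suc: "k < length ts \<Longrightarrow> step_shift ts k - step_shift ts (Suc k) = ts ! k"
  by (simp add: step_shift_def take_Suc_conv_app_nth)

(* If the entries sum to 1, the last step sits one unit below the wrap-around of the first. *)
lemma step_shift_last:
  assumes "sum_list ts = 1" and "length ts = Suc m"
  shows "1 + step_shift ts m = ts ! m"
proof -
  have "ts = take m ts @ [ts ! m]" using assms(2)
    by (metis lessI take_Suc_conv_app_nth take_all_iff order_refl)
  then have "sum_list ts = sum_list (take m ts) + ts ! m"
    by (metis sum_list_append sum_list_simps add_0_right)
  then show ?thesis using assms by (simp add: step_shift_def)
qed

lemma step_memI:
  assumes "real k / real (length ts) \<le> v" and "v \<le> real (Suc k) / real (length ts)"
  shows "v + of_int (step_shift ts k) \<in> step ts k"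
  using assms unfolding step_def by auto

lemma step_memE:
  assumes "p \<in> step ts k" and "length ts > 0"
  obtains v where "p = v + of_int (step_shift ts k)"
    and "real k \<le> real (length ts) * v" and "real (length ts) * v \<le> real k + 1"
proof -
  obtain v where v: "v \<in> {real k / real (length ts) .. real (Suc k) / real (length ts)}"
    "p = v + of_int (step_shift ts k)"
    using assms(1) unfolding step_def by blast
  then show ?thesis using that assms(2) by (auto simp: field_simps)
qed

lemma step_connected: "connected (step ts k)"
  unfolding step_def by (intro connected_continuous_image continuous_intros) auto

lemma step_nonempty: "length ts > 0 \<Longrightarrow> step ts k \<noteq> {}"
  using step_memI[of k ts "real k / real (length ts)"] by (auto simp: divide_right_mono)

lemma staircase_compact: "compact (staircase ts)"
  unfolding staircase_def step_def
  by (intro compact_UN compact_continuous_image continuous_intros) auto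

lemma nset_weight_staircase_Un:
  assumes "length ts > 0" and "finite P"
  shows "nset_weight (staircase ts \<union> P) \<le> enat (length ts + card P)"
proof -
  define F where "F = step ts ` {..<length ts} \<union> (\<lambda>p. {p}) ` P"
  have "staircase ts \<union> P = \<Union>F" unfolding F_def staircase_def by blast
  moreover have "finite F" using assms(2) by (simp add: F_def)
  moreover have "\<And>C. C \<in> F \<Longrightarrow> connected C \<and> C \<noteq> {}"
    using step_connected step_nonempty[OF assms(1)] by (auto simp: F_def)
  moreover have "card F \<le> length ts + card P"
  proof -
    have "card F \<le> card (step ts ` {..<length ts}) + card ((\<lambda>p. {p}) ` P)"
      unfolding F_def by (rule card_Un_le)
    also have "\<dots> \<le> length ts + card P"
      by (intro add_mono) (auto intro: card_image_le[THEN order_trans] simp: assms(2))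
    finally show ?thesis .
  qed
  ultimately show ?thesis using nset_weight_Union_le by (metis enat_ord_simps(1) order_trans)
qed

(* The staircase meets every class of \<real> modulo \<int>: the fractional part of x lies in some
   [k/n, (k+1)/n]. *)
lemma staircase_covers:
  assumes n0: "length ts > 0"
  shows "\<exists>y\<in>staircase ts. x - y \<in> \<int>"
proof -
  define n where "n = length ts"
  define f where "f = x - of_int \<lfloor>x\<rfloor>"
  have f: "0 \<le> f" "f < 1" unfolding f_def by linarith+
  have np: "real n > 0" using n0 n_def by simp
  define k where "k = nat \<lfloor>real n * f\<rfloor>"
  have "real n * f < real n" using f np by simp
  then have "\<lfloor>real n * f\<rfloor> < int n" by (simp add: floor_less_iff)
  then have kn: "k < n" unfolding k_def using f by (simp add: nat_less_iff)
  have "0 \<le> real n * f" using f by simp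
  then have "real k \<le> real n * f" "real n * f < real k + 1"
    unfolding k_def by linarith+
  then have "real k / real n \<le> f" "f \<le> real (Suc k) / real n"
    using np by (auto simp: field_simps)
  then have "f + of_int (step_shift ts k) \<in> staircase ts"
    using step_memI staircase_memI kn unfolding n_def by blast
  moreover have "x - (f + of_int (step_shift ts k)) \<in> \<int>" unfolding f_def by simp
  ultimately show ?thesis by blast
qed

lemma step_int_diff_bounds:
  assumes "p \<in> step ts k" and "q \<in> step ts l" and "p - q = of_int z" and "length ts > 0"
  defines "m \<equiv> z - step_shift ts k + step_shift ts l"
  shows "int k - int l - 1 \<le> int (length ts) * m" and "int (length ts) * m \<le> int k - int l + 1"
proof -
  obtain u where u: "p = u + of_int (step_shift ts k)"
    "real k \<le> real (length ts) * u" "real (length ts) * u \<le> real k + 1"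
    using step_memE[OF assms(1,4)] by blast
  obtain v where v: "q = v + of_int (step_shift ts l)"
    "real l \<le> real (length ts) * v" "real (length ts) * v \<le> real l + 1"
    using step_memE[OF assms(2,4)] by blast
  have "u - v = of_int m" using u(1) v(1) assms(3) by (simp add: m_def)
  then have "of_int (int (length ts) * m) = real (length ts) * u - real (length ts) * v"
    by (simp add: algebra_simps flip: of_int_diff)
  then show "int k - int l - 1 \<le> int (length ts) * m" "int (length ts) * m \<le> int k - int l + 1"
    using u v by linarith+
qed

(* Integer differences between a step and a later (or the same) step are 0 or some \<pm>t_k:
   only neighbouring steps, including the pair (last, first), meet modulo \<int>. *)
lemma step_int_diff_le:
  assumes sum: "sum_list ts = 1" and kl: "k \<le> l" "l < length ts"
    and p: "p \<in> step ts k" and q: "q \<in> step ts l" and z: "p - q = of_int z"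
  shows "z = 0 \<or> (\<exists>t\<in>set ts. \<bar>z\<bar> = \<bar>t\<bar>)"
proof -
  define n where "n = length ts"
  define m where "m = z - step_shift ts k + step_shift ts l"
  have n0: "n > 0" using kl n_def by auto
  have lo: "int k - int l - 1 \<le> int n * m" and hi: "int n * m \<le> int k - int l + 1"
    using step_int_diff_bounds[OF p q z] n0 unfolding m_def n_def by auto
  show ?thesis
  proof (cases "k = l")
    case True
    then have small: "\<bar>int n * m\<bar> \<le> 1" and zm: "z = m" using lo hi by (auto simp: m_def)
    show ?thesis
    proof (cases "n = 1")
      case True
      then obtain t where "ts = [t]" using n_def by (auto simp: length_Suc_conv)
      then show ?thesis using sum small True zm by auto
    next
      case False
      then have "\<bar>int n * m\<bar> \<ge> 2 * \<bar>m\<bar>" using n0 by (simp add: abs_mult mult_right_mono)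
      then show ?thesis using small zm by linarith
    qed
  next
    case False
    then have "k < l" using kl by simp
    have "int n * m \<le> int n * 0" using hi \<open>k < l\<close> by simp
    then have "m \<le> 0" using n0 by (simp add: mult_le_0_iff)
    moreover have "int n * (-2) < int n * m" using lo kl(2) n_def n0 by simp
    then have "-2 < m" using n0 by (metis mult_less_cancel_left_pos of_nat_0_less_iff)
    ultimately have "m = 0 \<or> m = -1" by linarith
    then show ?thesis
    proof
      assume "m = 0"
      then have "l = Suc k" using hi \<open>k < l\<close> by simp
      then have "z = ts ! k" using m_def \<open>m = 0\<close> step_shift_Suc[of k ts] kl by simp
      moreover have "ts ! k \<in> set ts" using \<open>k < l\<close> kl by simp
      ultimately show ?thesis by blast
    next
      assume "m = -1"
      then have "k = 0" "l = n - 1" using lo \<open>k < l\<close> kl n_def by auto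
      obtain j where j: "n = Suc j" using n0 not0_implies_Suc by blast
      then have "z = - (ts ! j)"
        using step_shift_last[OF sum, of j] m_def \<open>m = -1\<close> \<open>k = 0\<close> \<open>l = n - 1\<close> n_def
        by (simp add: step_shift_def)
      moreover have "ts ! j \<in> set ts" using j n_def by simp
      ultimately show ?thesis by auto
    qed
  qed
qed

lemma staircase_int_diff:
  assumes sum: "sum_list ts = 1" and "p \<in> staircase ts" "q \<in> staircase ts"
    and z: "p - q = of_int z"
  shows "z = 0 \<or> (\<exists>t\<in>set ts. \<bar>z\<bar> = \<bar>t\<bar>)"
proof -
  obtain k l where kl: "k < length ts" "l < length ts" "p \<in> step ts k" "q \<in> step ts l"
    using assms(2,3) unfolding staircase_def by blast
  show ?thesis
  proof (cases "k \<le> l")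
    case True
    show ?thesis using step_int_diff_le[OF sum True kl(2-4) z] .
  next
    case False
    have "q - p = of_int (- z)" using z by simp
    moreover have "l \<le> k" using False by simp
    ultimately have "- z = 0 \<or> (\<exists>t\<in>set ts. \<bar>- z\<bar> = \<bar>t\<bar>)"
      using step_int_diff_le[OF sum _ kl(1) kl(4,3)] by blast
    then show ?thesis by simp
  qed
qed

(* Conversely every t_j is a difference: the right end of step j and the left end of step
   j + 1 (resp. of step 0 when j is last) differ by t_j. *)
lemma staircase_realizes:
  assumes sum: "sum_list ts = 1" and t: "t \<in> set ts"
  shows "\<exists>p\<in>staircase ts. \<exists>q\<in>staircase ts. p - q = of_int \<bar>t\<bar>"
proof -
  define n where "n = length ts"
  obtain j where j: "j < n" "t = ts ! j" using t n_def by (metis in_set_conv_nth)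
  have np: "real n > 0" using j by simp
  have "\<exists>p\<in>staircase ts. \<exists>q\<in>staircase ts. p - q = of_int t"
  proof (cases "Suc j < n")
    case True
    define v where "v = real (Suc j) / real n"
    have "v + of_int (step_shift ts j) \<in> step ts j" "v + of_int (step_shift ts (Suc j)) \<in> step ts (Suc j)"
      using step_memI[of j ts v] step_memI[of "Suc j" ts v] np
      unfolding n_def v_def by (auto simp: divide_right_mono)
    moreover have "j < length ts" "Suc j < length ts" using True n_def by auto
    ultimately have "v + of_int (step_shift ts j) \<in> staircase ts"
         "v + of_int (step_shift ts (Suc j)) \<in> staircase ts"
      using staircase_memI by blast+
    moreover have "(v + of_int (step_shift ts j)) - (v + of_int (step_shift ts (Suc j))) = of_int t"
      using step_shift_Suc[of j ts] j n_def by simp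
    ultimately show ?thesis by blast
  next
    case False
    then have jn: "n = Suc j" using j by simp
    have "0 < length ts" using j n_def by linarith
    have "1 + of_int (step_shift ts j) \<in> step ts j" "0 + of_int (step_shift ts 0) \<in> step ts 0"
      using step_memI[of j ts 1] step_memI[of 0 ts 0] jn unfolding n_def by auto
    then have "1 + of_int (step_shift ts j) \<in> staircase ts" "0 + of_int (step_shift ts 0) \<in> staircase ts"
      using staircase_memI[of j ts] staircase_memI[of 0 ts] \<open>0 < length ts\<close> j n_def by auto
    moreover have "(1 + of_int (step_shift ts j)) - (0 + of_int (step_shift ts 0)) = (of_int t :: real)"
      using step_shift_last[OF sum, of j] jn n_def j by (simp add: step_shift_def flip: of_int_add)
    ultimately show ?thesis by blast
  qed
  then show ?thesis by (metis abs_of_nonneg abs_of_neg minus_diff_eq of_int_minus linorder_not_le)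
qed

lemma staircase_pos_diffs:
  assumes "sum_list ts = 1"
  shows "pos_diffs (staircase ts) = {m. m > 0 \<and> int m \<in> abs ` set ts}"
proof
  show "pos_diffs (staircase ts) \<subseteq> {m. m > 0 \<and> int m \<in> abs ` set ts}"
  proof
    fix m assume "m \<in> pos_diffs (staircase ts)"
    then obtain p q where m: "m > 0" "p \<in> staircase ts" "q \<in> staircase ts" "p - q = of_int (int m)"
      by (auto simp: pos_diffs_def)
    then obtain t where "t \<in> set ts" "\<bar>int m\<bar> = \<bar>t\<bar>"
      using staircase_int_diff[OF assms m(2-4)] by auto
    then show "m \<in> {m. m > 0 \<and> int m \<in> abs ` set ts}" using m(1) by force
  qed
  show "{m. m > 0 \<and> int m \<in> abs ` set ts} \<subseteq> pos_diffs (staircase ts)"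
  proof
    fix m assume "m \<in> {m. m > 0 \<and> int m \<in> abs ` set ts}"
    then obtain t where m: "m > 0" "t \<in> set ts" "int m = \<bar>t\<bar>" by auto
    then obtain p q where "p \<in> staircase ts" "q \<in> staircase ts" "p - q = real m"
      using staircase_realizes[OF assms] by (metis of_int_of_nat_eq)
    then show "m \<in> pos_diffs (staircase ts)" using m(1) by (auto simp: pos_diffs_def)
  qed
qed

lemma staircase_isolated_class:
  assumes n0: "length ts > 0" and r: "0 < r" "r < 1 / real (length ts)"
  shows "r \<in> staircase ts" and "\<And>p. p \<in> staircase ts \<Longrightarrow> p - r \<in> \<int> \<Longrightarrow> p = r"
proof -
  define n where "n = length ts"
  have np: "real n > 0" using n0 n_def by simp
  have "r + of_int (step_shift ts 0) \<in> step ts 0" using step_memI[of 0 ts r] r by auto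
  then show "r \<in> staircase ts" using staircase_memI[OF n0] by (simp add: step_shift_def)
  fix p assume p: "p \<in> staircase ts" "p - r \<in> \<int>"
  then obtain k where k: "k < n" "p \<in> step ts k" unfolding staircase_def n_def by blast
  obtain v where v: "p = v + of_int (step_shift ts k)"
    "real k \<le> real n * v" "real n * v \<le> real k + 1"
    using step_memE[OF k(2) n0] unfolding n_def by blast
  have "real k + 1 \<le> real n" using k(1) by linarith
  then have "real n * v \<le> real n * 1" using v(3) by linarith
  then have "v \<le> 1" using np mult_le_cancel_left_pos by blast
  moreover have "0 \<le> real n * v" using v(2) by linarith
  then have "0 \<le> v" using np by (simp add: zero_le_mult_iff)
  ultimately have v01: "0 \<le> v" "v \<le> 1" by auto
  have "1 \<le> n" using n0 n_def by linarith
  then have "1 / real n \<le> 1" by simp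
  then have "r < 1" using r(2) unfolding n_def by linarith
  have "v - r = (p - r) - of_int (step_shift ts k)" using v(1) by simp
  also have "\<dots> \<in> \<int>" using p(2) by simp
  moreover have "\<bar>v - r\<bar> < 1" using v01 r \<open>r < 1\<close> by linarith
  ultimately have "v = r" using Ints_nonzero_abs_less1 by fastforce
  have "real n * r < 1" using r(2) np unfolding n_def by (simp add: field_simps)
  then have "k = 0" using v(2) \<open>v = r\<close> by simp
  then show "p = r" using v(1) \<open>v = r\<close> by (simp add: step_shift_def)
qed

lemma pos_diffs_adjoin:
  fixes K :: "real set" and r :: "nat \<Rightarrow> real"
  assumes inj: "inj_on r B" and r01: "\<And>b. b \<in> B \<Longrightarrow> 0 \<le> r b \<and> r b < 1"
    and rK: "\<And>b. b \<in> B \<Longrightarrow> r b \<in> K"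
    and alone: "\<And>b p. b \<in> B \<Longrightarrow> p \<in> K \<Longrightarrow> p - r b \<in> \<int> \<Longrightarrow> p = r b"
    and B0: "0 \<notin> B"
  shows "pos_diffs (K \<union> (\<lambda>b. r b + real b) ` B) = pos_diffs K \<union> B"
proof
  let ?K = "K \<union> (\<lambda>b. r b + real b) ` B"
  show "pos_diffs K \<union> B \<subseteq> pos_diffs ?K"
  proof -
    have "b \<in> pos_diffs ?K" if "b \<in> B" for b
    proof -
      have "(r b + real b) - r b = real b" by simp
      moreover have "b > 0" using B0 that by (cases b) auto
      ultimately show ?thesis using that rK unfolding pos_diffs_def by blast
    qed
    then show ?thesis unfolding pos_diffs_def by blast
  qed
  show "pos_diffs ?K \<subseteq> pos_diffs K \<union> B"
  proof
    fix m assume "m \<in> pos_diffs ?K"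
    then obtain x y where m: "m > 0" "x \<in> ?K" "y \<in> ?K" "x - y = real m"
      by (auto simp: pos_diffs_def)
    consider "x \<in> K" "y \<in> K"
      | b where "b \<in> B" "x \<in> K" "y = r b + real b"
      | b where "b \<in> B" "x = r b + real b" "y \<in> K"
      | b b' where "b \<in> B" "b' \<in> B" "x = r b + real b" "y = r b' + real b'"
      using m(2,3) by blast
    then show "m \<in> pos_diffs K \<union> B"
    proof cases
      case 1
      then show ?thesis using m by (auto simp: pos_diffs_def)
    next
      case (2 b)
      have "x - r b = of_nat (m + b)" using m(4) 2 by simp
      then have "x = r b" using alone 2 by (metis Ints_of_nat)
      then show ?thesis using m 2 by simp
    next
      case (3 b)
      have "y - r b = of_int (int b - int m)" using m(4) 3 by simp
      then have "y = r b" using alone 3 by (metis Ints_of_int)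
      then show ?thesis using m 3 by simp
    next
      case (4 b b')
      have "r b - r b' = of_int (int m - int b + int b')" using m(4) 4 by simp
      then have "r b = r b'"
        using r01[OF 4(1)] r01[OF 4(2)] Ints_nonzero_abs_less1[of "r b - r b'"] by force
      then show ?thesis using inj 4 m by (simp add: inj_on_eq_iff)
    qed
  qed
qed

lemma rep_to_list:
  assumes "is_rep A S w e"
  obtains ts where "sum_list ts = 1" and "length ts = (\<Sum>a\<in>S. w a)" and "abs ` set ts = int ` S"
proof -
  have S: "finite S" "\<forall>a\<in>S. w a \<ge> 1 \<and> e a \<in> {1, -1}" "(\<Sum>a\<in>S. e a * int (w a) * int a) = 1"
    using assms by (auto simp: is_rep_def)
  obtain xs where xs: "distinct xs" "set xs = S" using S(1) finite_distinct_list by blast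
  define ts where "ts = concat (map (\<lambda>a. replicate (w a) (e a * int a)) xs)"
  have "sum_list ts = (\<Sum>a\<leftarrow>xs. int (w a) * (e a * int a))"
    unfolding ts_def by (induction xs) (auto simp: sum_list_replicate)
  also have "\<dots> = (\<Sum>a\<in>S. int (w a) * (e a * int a))"
    using sum.distinct_set_conv_list[OF xs(1), of "\<lambda>a. int (w a) * (e a * int a)"] xs(2) by simp
  also have "\<dots> = (\<Sum>a\<in>S. e a * int (w a) * int a)"
    by (simp add: algebra_simps)
  finally have "sum_list ts = 1" using S by simp
  moreover have "length ts = (\<Sum>a\<in>S. w a)"
    unfolding ts_def using sum.distinct_set_conv_list[OF xs(1), of w] xs(2)
    by (simp add: length_concat comp_def)
  moreover have "abs ` set ts = int ` S"
  proof -
    have "set ts = (\<lambda>a. e a * int a) ` S"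
      unfolding ts_def using S(2) xs(2) by fastforce
    then have "abs ` set ts = (\<lambda>a. \<bar>e a * int a\<bar>) ` S" by (simp add: image_image)
    also have "\<dots> = int ` S" using S(2) by (intro image_cong) (auto simp: abs_mult)
    finally show ?thesis .
  qed
  ultimately show ?thesis using that by blast
qed

(* The geometric realization of a single representation of 1: the staircase of its summands
   together with the points r_b + b, b \<in> A - S, where r_b = 1 / (n (b + 2)). *)
lemma geometric_realization:
  assumes rep: "is_rep A S w e" and fin: "finite A" and A0: "0 \<notin> A"
  shows "\<exists>K. N_set K \<and> A = pos_diffs K \<and> nset_weight K \<le> enat (rep_weight A S w)"
proof -
  obtain ts where ts: "sum_list ts = 1" "length ts = (\<Sum>a\<in>S. w a)" "abs ` set ts = int ` S"
    using rep_to_list[OF rep] by blast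
  have SA: "S \<subseteq> A" using rep by (simp add: is_rep_def)
  define n where "n = length ts"
  have len0: "length ts > 0" using ts(1) by (cases ts) auto
  then have "1 \<le> n" unfolding n_def by linarith
  define B where "B = A - S"
  have finB: "finite B" and B0: "0 \<notin> B" using fin A0 by (auto simp: B_def)
  define r where "r b = 1 / (real n * (real b + 2))" for b :: nat
  have r_pos: "0 < r b" for b using \<open>1 \<le> n\<close> by (simp add: r_def)
  have r_small: "r b < 1 / real (length ts)" for b
  proof -
    have "(1 / real n) * (1 / (real b + 2)) < (1 / real n) * 1"
      using \<open>1 \<le> n\<close> by (intro mult_strict_left_mono) auto
    then show ?thesis by (simp add: r_def n_def)
  qed
  have "1 / real (length ts) \<le> 1" using \<open>1 \<le> n\<close> unfolding n_def[symmetric] by simp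
  then have r01: "0 \<le> r b \<and> r b < 1" for b using r_pos[of b] r_small[of b] by linarith
  have "inj_on r B" using \<open>1 \<le> n\<close> by (auto simp: r_def inj_on_def)
  define K where "K = staircase ts \<union> (\<lambda>b. r b + real b) ` B"
  have "compact K" unfolding K_def
    by (rule compact_Un[OF staircase_compact finite_imp_compact[OF finite_imageI[OF finB]]])
  moreover have "\<forall>x. \<exists>y\<in>K. x - y \<in> \<int>" using staircase_covers[OF len0] unfolding K_def by blast
  ultimately have "N_set K" by (simp add: N_set_def)
  moreover have "pos_diffs K = A"
  proof -
    have "pos_diffs (staircase ts) = {m. m > 0 \<and> m \<in> S}"
      using staircase_pos_diffs[OF ts(1)] unfolding ts(3) by (simp add: inj_image_mem_iff)
    also have "\<dots> = S" using A0 SA by (auto intro: gr0I)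
    finally have "pos_diffs (staircase ts) = S" .
    moreover have "pos_diffs K = pos_diffs (staircase ts) \<union> B"
      unfolding K_def using \<open>inj_on r B\<close> r01 B0
        staircase_isolated_class[OF len0 r_pos r_small] by (intro pos_diffs_adjoin) auto
    ultimately show ?thesis using SA by (auto simp: B_def)
  qed
  moreover have "nset_weight K \<le> enat (rep_weight A S w)"
  proof -
    have "nset_weight K \<le> enat (n + card ((\<lambda>b. r b + real b) ` B))"
      unfolding K_def n_def by (rule nset_weight_staircase_Un[OF len0 finite_imageI[OF finB]])
    also have "\<dots> \<le> enat (n + card B)" using card_image_le[OF finB] by simp
    also have "n + card B = rep_weight A S w"
      unfolding rep_weight_def B_def n_def ts(2)
      using card_Diff_subset[OF finite_subset[OF SA fin] SA] card_mono[OF fin SA] by simp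
    finally show ?thesis .
  qed
  ultimately show ?thesis by auto
qed

theorem mainTheorem5:
  fixes A :: "nat set"
  assumes "finite A" and "0 \<notin> A" and "rel_prime_set A"
  shows "Geo A \<le> Add A"
  unfolding Add_def
proof (rule INF_greatest)
  fix p assume "p \<in> {(S, w, e). is_rep A S w e}"
  then obtain S w e where p: "p = (S, w, e)" "is_rep A S w e" by auto
  obtain K where K: "N_set K" "A = pos_diffs K" "nset_weight K \<le> enat (rep_weight A S w)"
    using geometric_realization[OF p(2) assms(1,2)] by blast
  have "Geo A \<le> nset_weight K" unfolding Geo_def using K by (intro INF_lower) auto
  then show "Geo A \<le> enat (rep_weight A (fst p) (fst (snd p)))" using K p by simp
qed

end
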